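(* Let $k=k(n)$ be an integer with $\frac{n}{4\ln n}<k\le n$. There is a constant $c>0$ such that if $r>\sqrt{\frac{c\ln\ln n}{k}}$, then w.h.p. $G(n,r)$ has no independent set of size $k$.
   Context: Here the $n$ points of $G(n,r)$ are chosen independently and uniformly at random on the unit torus (the unit square with wraparound); two points are joined by a straight-line edge iff their distance is at most $r=r(n)$. An independent set is a set of vertices no two of which are adjacent. "W.h.p." means with probability tending to $1$ as $n\to\infty$. *)

theory Defs
  imports "HOL-Probability.Probability"
begin

text \<open>The unit torus is modelled by the fundamental domain [0,1)^2 with the
  wrap-around (torus) distance.\<close>

definition circ_dist :: "real \<Rightarrow> real \<Rightarrow> real" where
  "circ_dist a b = min \<bar>a - b\<bar> (1 - \<bar>a - b\<bar>)"

definition torus_dist :: "real \<times> real \<Rightarrow> real \<times> real \<Rightarrow> real" where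
  "torus_dist p q = sqrt ((circ_dist (fst p) (fst q))\<^sup>2 + (circ_dist (snd p) (snd q))\<^sup>2)"

definition unif_torus :: "(real \<times> real) measure" where
  "unif_torus = uniform_measure lborel ({0..<1} \<times> {0..<1})"

definition rgg_space :: "nat \<Rightarrow> (nat \<Rightarrow> real \<times> real) measure" where
  "rgg_space n = PiM {..<n} (\<lambda>_. unif_torus)"

text \<open>In G(n,r) vertices i, j are adjacent iff the torus distance of X_i and X_j is
  at most r.  The event that G(n,r) has an independent set of size k.\<close>
definition has_indep_set :: "nat \<Rightarrow> real \<Rightarrow> nat \<Rightarrow> (nat \<Rightarrow> real \<times> real) set" where
  "has_indep_set n r k =
     {X \<in> space (rgg_space n). \<exists>S \<subseteq> {..<n}. card S = k \<and>
        (\<forall>i\<in>S. \<forall>j\<in>S. i \<noteq> j \<longrightarrow> torus_dist (X i) (X j) > r)}"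

end

theory Submission
  imports Defs "HOL-Real_Asymp.Real_Asymp"
begin

text \<open>The statement is a packing bound and holds deterministically, not only w.h.p.:
  cut the fundamental domain into \<open>m\<^sup>2\<close> square cells of side \<open>1/m\<close>. Two points of the same
  cell are at torus distance less than \<open>\<surd>2/m\<close>, so points that are pairwise more than
  \<open>r \<ge> \<surd>2/m\<close> apart number at most \<open>m\<^sup>2\<close>. When \<open>r\<^sup>2 k > 8\<close> one can take \<open>m\<^sup>2 < k\<close>, hence no
  \<open>k\<close> points are independent. With \<open>c = 8\<close> the hypothesis gives \<open>r\<^sup>2 k > 8 ln ln n \<ge> 8\<close>
  eventually, so the event is eventually a null set.\<close>

lemma circ_dist_le_abs_diff: "circ_dist a b \<le> \<bar>a - b\<bar>"
  unfolding circ_dist_def by simp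

lemma circ_dist_nonneg: "\<bar>a - b\<bar> \<le> 1 \<Longrightarrow> 0 \<le> circ_dist a b"
  unfolding circ_dist_def by simp

lemma abs_diff_lt_if_floor_mult_eq:
  fixes m :: nat and x y :: real
  assumes "m > 0" "\<lfloor>m * x\<rfloor> = \<lfloor>m * y\<rfloor>"
  shows "\<bar>x - y\<bar> < 1 / m"
proof -
  have "real m * \<bar>x - y\<bar> = \<bar>m * x - m * y\<bar>" by (simp add: abs_mult flip: right_diff_distrib)
  also have "\<dots> < 1" using assms(2) by linarith
  finally show ?thesis using assms(1) by (simp add: field_simps)
qed

lemma torus_dist_lt_if_same_grid_cell:
  fixes m :: nat and p q :: "real \<times> real"
  assumes "m > 0"
    and "\<lfloor>m * fst p\<rfloor> = \<lfloor>m * fst q\<rfloor>" "\<lfloor>m * snd p\<rfloor> = \<lfloor>m * snd q\<rfloor>"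
  shows "torus_dist p q < sqrt 2 / m"
proof -
  have square_lt: "(circ_dist a b)\<^sup>2 < (1 / m)\<^sup>2" if "\<bar>a - b\<bar> < 1 / m" for a b
  proof (rule power_strict_mono)
    show "circ_dist a b < 1 / m" using that circ_dist_le_abs_diff[of a b] by linarith
    have "1 / real m \<le> 1" using \<open>m > 0\<close> by simp
    then show "0 \<le> circ_dist a b" using that by (intro circ_dist_nonneg) linarith
  qed simp
  have "(circ_dist (fst p) (fst q))\<^sup>2 < (1 / m)\<^sup>2" "(circ_dist (snd p) (snd q))\<^sup>2 < (1 / m)\<^sup>2"
    using assms by (intro square_lt abs_diff_lt_if_floor_mult_eq; simp)+
  then have "torus_dist p q < sqrt (2 * (1 / m)\<^sup>2)"
    unfolding torus_dist_def by (intro real_sqrt_less_mono) linarith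
  also have "\<dots> = sqrt 2 / m" by (simp add: real_sqrt_mult real_sqrt_divide)
  finally show ?thesis .
qed

lemma card_le_if_torus_separated:
  fixes m :: nat and X :: "'a \<Rightarrow> real \<times> real"
  assumes "m > 0" "finite S"
    and in_domain: "\<forall>i\<in>S. X i \<in> {0..<1} \<times> {0..<1}"
    and separated: "\<forall>i\<in>S. \<forall>j\<in>S. i \<noteq> j \<longrightarrow> sqrt 2 / m \<le> torus_dist (X i) (X j)"
  shows "card S \<le> m\<^sup>2"
proof -
  define cell where "cell i = (\<lfloor>m * fst (X i)\<rfloor>, \<lfloor>m * snd (X i)\<rfloor>)" for i
  have "inj_on cell S"
  proof (rule inj_onI, rule ccontr)
    fix i j assume "i \<in> S" "j \<in> S" "cell i = cell j" "i \<noteq> j"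
    then show False
      using separated torus_dist_lt_if_same_grid_cell[OF \<open>m > 0\<close>, of "X i" "X j"]
      by (force simp: cell_def)
  qed
  moreover have "cell ` S \<subseteq> {0..<int m} \<times> {0..<int m}"
    using in_domain \<open>m > 0\<close> by (auto simp: cell_def floor_less_iff mult_less_cancel_left1)
  ultimately have "card S \<le> card ({0..<int m} \<times> {0..<int m})"
    by (metis card_image card_mono finite_SigmaI finite_atLeastLessThan_int)
  also have "\<dots> = m\<^sup>2" by (simp add: card_cartesian_product power2_eq_square)
  finally show ?thesis .
qed

lemma grid_size_exists:
  fixes r :: real and k :: nat
  assumes "k \<ge> 2" and r: "sqrt (8 / k) < r"
  shows "\<exists>m::nat. m > 0 \<and> sqrt 2 / m \<le> r \<and> m\<^sup>2 < k"
proof -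
  have sqrt_nonneg: "0 \<le> sqrt (8 / k)" by simp
  then have "r > 0" using r by linarith
  have "8 / k < r\<^sup>2" using power_strict_mono[OF r sqrt_nonneg, of 2] by simp
  then have "8 < r\<^sup>2 * k" using \<open>k \<ge> 2\<close> by (simp add: divide_less_eq)
  define m where "m = nat \<lceil>sqrt 2 / r\<rceil>"
  have "real m = of_int \<lceil>sqrt 2 / r\<rceil>" unfolding m_def using \<open>r > 0\<close> by simp
  then have m: "sqrt 2 / r \<le> m" "m < sqrt 2 / r + 1" by linarith+
  have "0 < sqrt 2 / r" using \<open>r > 0\<close> by simp
  then have "m > 0" using m(1) by (simp add: order.strict_trans2)
  have "sqrt 2 / m \<le> r" using m \<open>m > 0\<close> \<open>r > 0\<close> by (simp add: field_simps)
  moreover have "m\<^sup>2 < k"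
  proof (cases "m = 1")
    case True then show ?thesis using \<open>k \<ge> 2\<close> by simp
  next
    case False
    then have "2 \<le> real m" using \<open>m > 0\<close> by simp
    then have "r * m \<le> 2 * (r * m - r)" using \<open>r > 0\<close> by (simp add: algebra_simps)
    also have "r * m - r < sqrt 2" using m(2) \<open>r > 0\<close> by (simp add: field_simps)
    finally have "r * m < 2 * sqrt 2" by simp
    then have "(r * m)\<^sup>2 < (2 * sqrt 2)\<^sup>2" using \<open>r > 0\<close> by (intro power_strict_mono) auto
    then have "(r * m)\<^sup>2 < 8" by (simp add: power_mult_distrib)
    then have "r\<^sup>2 * m\<^sup>2 < r\<^sup>2 * k" using \<open>8 < r\<^sup>2 * k\<close> by (simp add: power_mult_distrib)
    then show ?thesis using \<open>r > 0\<close> by (simp flip: of_nat_power)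
  qed
  ultimately show ?thesis using \<open>m > 0\<close> by blast
qed

lemma not_has_indep_set_if_in_fundamental_domain:
  assumes "\<forall>i<n. X i \<in> {0..<1} \<times> {0..<1}" "k \<ge> 2" "sqrt (8 / k) < r"
  shows "X \<notin> has_indep_set n r k"
proof
  assume "X \<in> has_indep_set n r k"
  then obtain S where S: "S \<subseteq> {..<n}" "card S = k"
    and independent: "\<forall>i\<in>S. \<forall>j\<in>S. i \<noteq> j \<longrightarrow> r < torus_dist (X i) (X j)"
    unfolding has_indep_set_def by blast
  obtain m :: nat where m: "m > 0" "sqrt 2 / m \<le> r" "m\<^sup>2 < k"
    using grid_size_exists assms(2,3) by blast
  have "\<forall>i\<in>S. \<forall>j\<in>S. i \<noteq> j \<longrightarrow> sqrt 2 / m \<le> torus_dist (X i) (X j)"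
    using independent m(2) by force
  then have "card S \<le> m\<^sup>2"
    using m S assms(1) by (intro card_le_if_torus_separated) (auto intro: finite_subset)
  then show False using S m by simp
qed

lemma sets_rgg_space: "sets (rgg_space n) = sets (PiM {..<n} (\<lambda>_. borel :: (real \<times> real) measure))"
  unfolding rgg_space_def unif_torus_def by (intro sets_PiM_cong) auto

lemma measurable_torus_dist:
  assumes "i < n" "j < n"
  shows "(\<lambda>X. torus_dist (X i) (X j)) \<in> borel_measurable (rgg_space n)"
proof -
  have [measurable]: "i \<in> {..<n}" "j \<in> {..<n}" using assms by auto
  have "(\<lambda>X. torus_dist (X i) (X j)) \<in> borel_measurable (PiM {..<n} (\<lambda>_. borel \<Otimes>\<^sub>M borel :: (real \<times> real) measure))"
    unfolding torus_dist_def circ_dist_def by measurable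
  then show ?thesis
    by (simp add: borel_prod measurable_cong_sets[OF sets_rgg_space refl])
qed

lemma has_indep_set_sets: "has_indep_set n r k \<in> sets (rgg_space n)"
proof -
  have "has_indep_set n r k = {X \<in> space (rgg_space n). \<exists>S\<in>{S. S \<subseteq> {..<n} \<and> card S = k}.
      \<forall>i\<in>S. \<forall>j\<in>S. i \<noteq> j \<longrightarrow> r < torus_dist (X i) (X j)}"
    unfolding has_indep_set_def by auto
  also have "\<dots> \<in> sets (rgg_space n)"
    by (intro sets.sets_Collect_finite_Ex sets.sets_Collect_finite_All sets.sets_Collect_imp
        sets.sets_Collect_const borel_measurable_less measurable_torus_dist)
       (auto intro: finite_subset[of _ "Pow {..<n}"] finite_subset[of _ "{..<n}"])
  finally show ?thesis .
qed

lemma emeasure_lborel_unit_square: "emeasure lborel ({0..<1::real} \<times> {0..<1::real}) = 1"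
proof -
  have "emeasure lborel ({0..<1::real} \<times> {0..<1::real})
      = emeasure (lborel \<Otimes>\<^sub>M lborel) ({0..<1::real} \<times> {0..<1::real})"
    by (simp add: lborel_prod)
  also have "\<dots> = 1"
    by (simp add: lborel.emeasure_pair_measure_Times)
  finally show ?thesis .
qed

lemma prob_space_unif_torus: "prob_space unif_torus"
  unfolding unif_torus_def
  by (rule prob_space_uniform_measure) (simp_all add: emeasure_lborel_unit_square)

lemma AE_rgg_space_in_fundamental_domain:
  "AE X in rgg_space n. \<forall>i<n. X i \<in> {0..<1} \<times> {0..<1}"
proof -
  have "AE x in unif_torus. x \<in> {0..<1} \<times> {0..<1}"
    unfolding unif_torus_def by (rule AE_uniform_measureI) (auto simp: borel_prod[symmetric])
  then have "AE X in rgg_space n. \<forall>i\<in>{..<n}. X i \<in> {0..<1} \<times> {0..<1}"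
    unfolding rgg_space_def using prob_space_unif_torus
    by (auto intro!: eventually_ball_finite AE_PiM_component)
  then show ?thesis by (auto elim: eventually_mono)
qed

lemma has_indep_set_null_sets:
  assumes "k \<ge> 2" "sqrt (8 / k) < r"
  shows "has_indep_set n r k \<in> null_sets (rgg_space n)"
proof -
  have "AE X in rgg_space n. X \<notin> has_indep_set n r k"
    using AE_rgg_space_in_fundamental_domain[of n]
    by eventually_elim (rule not_has_indep_set_if_in_fundamental_domain[OF _ assms])
  then show ?thesis using AE_iff_null_sets has_indep_set_sets by blast
qed

lemma eventually_ln_ln_ge_1: "\<forall>\<^sub>F n in sequentially. 1 \<le> ln (ln (real n))"
  by real_asymp

lemma eventually_n_div_4_ln_ge_1: "\<forall>\<^sub>F n in sequentially. 1 \<le> real n / (4 * ln (real n))"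
  by real_asymp

theorem corollary6:
  shows "\<exists>c>0. \<forall>(k :: nat \<Rightarrow> nat) (r :: nat \<Rightarrow> real).
     (\<forall>\<^sub>F n in sequentially. real n / (4 * ln (real n)) < real (k n) \<and> k n \<le> n \<and>
         r n > sqrt (c * ln (ln (real n)) / real (k n)))
     \<longrightarrow> (\<forall>n. has_indep_set n (r n) (k n) \<in> sets (rgg_space n)) \<and>
         (\<lambda>n. measure (rgg_space n) (has_indep_set n (r n) (k n))) \<longlonglongrightarrow> 0"
proof (intro exI[of _ 8] conjI allI impI)
  fix k :: "nat \<Rightarrow> nat" and r :: "nat \<Rightarrow> real"
  assume "\<forall>\<^sub>F n in sequentially. real n / (4 * ln (real n)) < real (k n) \<and> k n \<le> n \<and>
      r n > sqrt (8 * ln (ln (real n)) / real (k n))"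
  then have "\<forall>\<^sub>F n in sequentially. has_indep_set n (r n) (k n) \<in> null_sets (rgg_space n)"
    using eventually_ln_ln_ge_1 eventually_n_div_4_ln_ge_1
  proof eventually_elim
    case (elim n)
    then have "k n \<ge> 2" by linarith
    have "sqrt (8 / k n) \<le> sqrt (8 * ln (ln (real n)) / k n)"
      using elim by (simp add: divide_right_mono)
    then have "sqrt (8 / k n) < r n" using elim by linarith
    then show ?case using \<open>k n \<ge> 2\<close> by (intro has_indep_set_null_sets)
  qed
  then show "(\<lambda>n. measure (rgg_space n) (has_indep_set n (r n) (k n))) \<longlonglongrightarrow> 0"
    by (rule tendsto_eventually[OF eventually_mono]) (simp add: measure_def null_setsD1)
qed (simp_all add: has_indep_set_sets)

end
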